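(* There exist an objective $f:\mathbb{R}^d\to\mathbb{R}$ satisfying Assumptions 1 and 2, a stochastic gradient oracle $(F,\mathcal{D})$ for $f$ satisfying Assumption 3, an initial point $x^{(0)}\in\mathbb{R}^d$ and a constant $\epsilon_0>0$ such that the following holds: for GaLore with an arbitrary subspace optimizer (as defined in the context), any ranks $r_\ell<\min\{m_\ell,n_\ell\}$, any subspace changing period $\tau\ge 1$, any choice of the maps $\rho_\ell^{(t)}$ (with arbitrary hyperparameters), and every realization of the samples, the iterates satisfy $\|\nabla f(x^{(t)})\|_2^2\ge\epsilon_0$ for all $t\ge 0$.
   Context: Parameters: $x=(\mathrm{vec}(X_1)^\top,\dots,\mathrm{vec}(X_{N_L})^\top)^\top\in\mathbb{R}^d$ with $X_\ell\in\mathbb{R}^{m_\ell\times n_\ell}$, $d=\sum_\ell m_\ell n_\ell$; $f(x)=\mathbb{E}_{\xi\sim\mathcal{D}}F(x;\xi)$ and $\nabla_\ell$ denotes the gradient with respect to $X_\ell$. Assumption 1: $\inf_x f(x)>-\infty$. Assumption 2: $\|\nabla f(x)-\nabla f(y)\|_2\le L\|x-y\|_2$ for all $x,y$. Assumption 3: for all $x$ and $\ell$, $\mathbb{E}_{\xi\sim\mathcal{D}}[\nabla_\ell F(x;\xi)]=\nabla_\ell f(x)$ and $\mathbb{E}_{\xi\sim\mathcal D}\|\nabla_\ell F(x;\xi)-\nabla_\ell f(x)\|_F^2\le\sigma_\ell^2$. GaLore with an arbitrary subspace optimizer: at each iteration $t=0,1,\dots$ draw $\xi^{(t)}\sim\mathcal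 D$ (independently) and set $G_\ell^{(t)}=\nabla_\ell F(x^{(t)};\xi^{(t)})$. If $t\equiv 0\pmod\tau$, compute an SVD $G_\ell^{(t)}=U\Sigma V^\top$ (singular values in nonincreasing order) and set $P_\ell^{(t)}=U[:,:r_\ell]$, $Q_\ell^{(t)}=V[:,:r_\ell]$ (first $r_\ell$ columns); otherwise $P_\ell^{(t)}=P_\ell^{(t-1)}$, $Q_\ell^{(t)}=Q_\ell^{(t-1)}$. Update $X_\ell^{(t+1)}=X_\ell^{(t)}+P_\ell^{(t)}\rho_\ell^{(t)}((P_\ell^{(t)})^\top G_\ell^{(t)})$ if $m_\ell\le n_\ell$, and $X_\ell^{(t+1)}=X_\ell^{(t)}+\rho_\ell^{(t)}(G_\ell^{(t)}Q_\ell^{(t)})(Q_\ell^{(t)})^\top$ if $m_\ell>n_\ell$, where $\rho_\ell^{(t)}$ is an arbitrary (possibly stateful, history-dependent) map sending matrices to matrices of the same size (e.g. Adam, momentum SGD). *)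

theory Defs
  imports "HOL-Probability.Probability"
begin

text \<open>Layer l has shape (m l) x (n l); entries outside this shape are required to be 0
  (predicate valid_param), so the valid parameters are exactly a copy of R^d.
  Matrices are functions row => column => real, used only on their declared index range.\<close>

type_synonym mat = "nat \<Rightarrow> nat \<Rightarrow> real"
type_synonym param = "nat \<Rightarrow> mat"

definition valid_param :: "nat \<Rightarrow> (nat \<Rightarrow> nat) \<Rightarrow> (nat \<Rightarrow> nat) \<Rightarrow> param \<Rightarrow> bool" where
  "valid_param NL m n x \<longleftrightarrow>
     (\<forall>l i j. \<not> (l < NL \<and> i < m l \<and> j < n l) \<longrightarrow> x l i j = 0)"

definition padd :: "param \<Rightarrow> param \<Rightarrow> param" where
  "padd x y = (\<lambda>l i j. x l i j + y l i j)"

definition pdiff :: "param \<Rightarrow> param \<Rightarrow> param" where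
  "pdiff x y = (\<lambda>l i j. x l i j - y l i j)"

definition pinner :: "nat \<Rightarrow> (nat \<Rightarrow> nat) \<Rightarrow> (nat \<Rightarrow> nat) \<Rightarrow> param \<Rightarrow> param \<Rightarrow> real" where
  "pinner NL m n x y = (\<Sum>l<NL. \<Sum>i<m l. \<Sum>j<n l. x l i j * y l i j)"

definition pnorm :: "nat \<Rightarrow> (nat \<Rightarrow> nat) \<Rightarrow> (nat \<Rightarrow> nat) \<Rightarrow> param \<Rightarrow> real" where
  "pnorm NL m n x = sqrt (pinner NL m n x x)"

definition fro_sq :: "nat \<Rightarrow> nat \<Rightarrow> mat \<Rightarrow> real" where
  "fro_sq a b A = (\<Sum>i<a. \<Sum>j<b. (A i j)\<^sup>2)"

definition has_grad :: "nat \<Rightarrow> (nat \<Rightarrow> nat) \<Rightarrow> (nat \<Rightarrow> nat) \<Rightarrow> (param \<Rightarrow> real) \<Rightarrow> (param \<Rightarrow> param) \<Rightarrow> bool" where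
  "has_grad NL m n f g \<longleftrightarrow>
     (\<forall>x. valid_param NL m n x \<longrightarrow> valid_param NL m n (g x) \<and>
        (\<forall>e>0. \<exists>\<delta>>0. \<forall>h. valid_param NL m n h \<and> 0 < pnorm NL m n h \<and> pnorm NL m n h < \<delta> \<longrightarrow>
            \<bar>f (padd x h) - f x - pinner NL m n (g x) h\<bar> \<le> e * pnorm NL m n h))"

definition stoch_oracle ::
  "nat \<Rightarrow> (nat \<Rightarrow> nat) \<Rightarrow> (nat \<Rightarrow> nat) \<Rightarrow> (param \<Rightarrow> real) \<Rightarrow> (param \<Rightarrow> param)
   \<Rightarrow> (param \<Rightarrow> real \<Rightarrow> real) \<Rightarrow> (param \<Rightarrow> real \<Rightarrow> param) \<Rightarrow> real pmf \<Rightarrow> (nat \<Rightarrow> real) \<Rightarrow> bool" where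
  "stoch_oracle NL m n f g F GF D sig \<longleftrightarrow>
     (\<forall>\<xi>. has_grad NL m n (\<lambda>x. F x \<xi>) (\<lambda>x. GF x \<xi>)) \<and>
     (\<forall>x. valid_param NL m n x \<longrightarrow>
        integrable (measure_pmf D) (\<lambda>\<xi>. F x \<xi>) \<and>
        measure_pmf.expectation D (\<lambda>\<xi>. F x \<xi>) = f x) \<and>
     (\<forall>x l i j. valid_param NL m n x \<longrightarrow> l < NL \<longrightarrow> i < m l \<longrightarrow> j < n l \<longrightarrow>
        integrable (measure_pmf D) (\<lambda>\<xi>. GF x \<xi> l i j) \<and>
        measure_pmf.expectation D (\<lambda>\<xi>. GF x \<xi> l i j) = g x l i j) \<and>
     (\<forall>x l. valid_param NL m n x \<longrightarrow> l < NL \<longrightarrow>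
        integrable (measure_pmf D) (\<lambda>\<xi>. fro_sq (m l) (n l) (\<lambda>i j. GF x \<xi> l i j - g x l i j)) \<and>
        measure_pmf.expectation D (\<lambda>\<xi>. fro_sq (m l) (n l) (\<lambda>i j. GF x \<xi> l i j - g x l i j))
          \<le> (sig l)\<^sup>2)"

definition orth :: "nat \<Rightarrow> mat \<Rightarrow> bool" where
  "orth k U \<longleftrightarrow> (\<forall>i<k. \<forall>j<k. (\<Sum>p<k. U p i * U p j) = (if i = j then 1 else 0))"

definition is_svd :: "nat \<Rightarrow> nat \<Rightarrow> mat \<Rightarrow> mat \<Rightarrow> mat \<Rightarrow> mat \<Rightarrow> bool" where
  "is_svd a b G U S V \<longleftrightarrow>
     orth a U \<and> orth b V \<and>
     (\<forall>i<a. \<forall>j<b. i \<noteq> j \<longrightarrow> S i j = 0) \<and>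
     (\<forall>i<min a b. 0 \<le> S i i) \<and>
     (\<forall>i j. i \<le> j \<longrightarrow> j < min a b \<longrightarrow> S j j \<le> S i i) \<and>
     (\<forall>i<a. \<forall>j<b. G i j = (\<Sum>p<a. \<Sum>q<b. U i p * S p q * V j q))"

definition proj_grad ::
  "(nat \<Rightarrow> nat) \<Rightarrow> (nat \<Rightarrow> nat) \<Rightarrow> (param \<Rightarrow> real \<Rightarrow> param) \<Rightarrow> (nat \<Rightarrow> param) \<Rightarrow> (nat \<Rightarrow> param)
   \<Rightarrow> (nat \<Rightarrow> real) \<Rightarrow> (nat \<Rightarrow> param) \<Rightarrow> nat \<Rightarrow> nat \<Rightarrow> mat" where
  "proj_grad m n GF P Q \<xi> x s l =
     (if m l \<le> n l then (\<lambda>a j. \<Sum>i<m l. P s l i a * GF (x s) (\<xi> s) l i j)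
      else (\<lambda>i a. \<Sum>j<n l. GF (x s) (\<xi> s) l i j * Q s l j a))"

text \<open>A run of GaLore with an arbitrary subspace optimizer. rho l t is the (arbitrary,
  stateful / history-dependent) subspace optimizer of layer l at step t: its output may depend
  on the whole history of its inputs R_l^(0), ..., R_l^(t).  P t l (resp. Q t l) is the m x r
  (resp. n x r) projection matrix; its entries outside this range are irrelevant.
  Any SVD may be chosen at the refresh steps.\<close>
definition galore_run ::
  "nat \<Rightarrow> (nat \<Rightarrow> nat) \<Rightarrow> (nat \<Rightarrow> nat) \<Rightarrow> (param \<Rightarrow> real \<Rightarrow> param) \<Rightarrow> (nat \<Rightarrow> nat) \<Rightarrow> nat
   \<Rightarrow> (nat \<Rightarrow> nat \<Rightarrow> (nat \<Rightarrow> mat) \<Rightarrow> mat) \<Rightarrow> (nat \<Rightarrow> real)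
   \<Rightarrow> (nat \<Rightarrow> param) \<Rightarrow> (nat \<Rightarrow> param) \<Rightarrow> (nat \<Rightarrow> param) \<Rightarrow> bool" where
  "galore_run NL m n GF r \<tau> rho \<xi> x P Q \<longleftrightarrow>
     (\<forall>t l. l < NL \<longrightarrow>
        (if t mod \<tau> = 0 then
           (\<exists>U S V. is_svd (m l) (n l) (GF (x t) (\<xi> t) l) U S V \<and>
              (\<forall>i<m l. \<forall>a<r l. P t l i a = U i a) \<and>
              (\<forall>j<n l. \<forall>a<r l. Q t l j a = V j a))
         else
           (\<forall>i<m l. \<forall>a<r l. P t l i a = P (t - 1) l i a) \<and>
           (\<forall>j<n l. \<forall>a<r l. Q t l j a = Q (t - 1) l j a))) \<and>
     (\<forall>t. x (Suc t) = (\<lambda>l i j.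
        if l < NL \<and> i < m l \<and> j < n l then
          (let hist = (\<lambda>s. if s \<le> t then proj_grad m n GF P Q \<xi> x s l else (\<lambda>_ _. 0));
               D = rho l t hist in
           if m l \<le> n l then x t l i j + (\<Sum>a<r l. P t l i a * D a j)
           else x t l i j + (\<Sum>a<r l. D i a * Q t l j a))
        else 0))"

end

theory Submission
  imports Defs
begin

text \<open>GaLore moves each layer only inside the span of the top \<open>r < min m n\<close> singular vectors of the
  stochastic gradient sampled at the most recent refresh step. Take \<open>f x = x\<^sub>0\<^sub>0\<^sub>0\<^sup>2 / 2\<close> and add
  Rademacher noise \<open>\<plusminus>2\<close> on the other diagonal entries of the first layer. Whenever
  \<open>x\<^sub>0\<^sub>0\<^sub>0 = 1\<close>, the sampled first-layer gradient is \<open>diag(1, \<plusminus>2, \<dots>, \<plusminus>2)\<close>; its top \<open>r\<close>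
  singular vectors all belong to the singular value \<open>2\<close> and so vanish in coordinate \<open>0\<close>.
  Hence \<open>x\<^sub>0\<^sub>0\<^sub>0\<close> is never updated, stays \<open>1\<close>, and the true gradient keeps norm \<open>1\<close>.\<close>

lemma is_svd_transpose:
  assumes "is_svd a b G U S V"
  shows "is_svd b a (\<lambda>i j. G j i) V (\<lambda>i j. S j i) U"
proof -
  have "G j i = (\<Sum>p<b. \<Sum>q<a. V i p * S q p * U j q)" if "i < b" "j < a" for i j
    using assms that unfolding is_svd_def
    by (simp add: sum.swap[where A = "{..<a}"] mult_ac)
  with assms show ?thesis
    unfolding is_svd_def by (auto simp: min.commute)
qed

lemma is_svd_expansion:
  assumes svd: "is_svd a b G U S V" and "i < a" "j < b"
  shows "G i j = (\<Sum>q<min a b. U i q * S q q * V j q)"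
proof -
  have "G i j = (\<Sum>p<a. \<Sum>q<b. U i p * S p q * V j q)"
    using assms by (simp add: is_svd_def)
  also have "\<dots> = (\<Sum>p<a. \<Sum>q<b. if q = p then U i p * S p p * V j p else 0)"
    using svd by (intro sum.cong refl) (auto simp: is_svd_def)
  also have "\<dots> = (\<Sum>p<a. if p < b then U i p * S p p * V j p else 0)"
    by simp
  also have "\<dots> = (\<Sum>p\<in>{p\<in>{..<a}. p < b}. U i p * S p p * V j p)"
    by (rule sum.inter_filter[symmetric]) simp
  also have "{p\<in>{..<a}. p < b} = {..<min a b}"
    by auto
  finally show ?thesis .
qed

lemma is_svd_right_singular:
  assumes svd: "is_svd a b G U S V" and i: "i < a" and q: "q < min a b"
  shows "(\<Sum>j<b. G i j * V j q) = S q q * U i q"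
proof -
  have orthV: "(\<Sum>j<b. V j p * V j q) = (if p = q then 1 else 0)" if "p < min a b" for p
    using svd that q by (simp add: is_svd_def orth_def)
  have "(\<Sum>j<b. G i j * V j q) = (\<Sum>j<b. \<Sum>p<min a b. U i p * S p p * (V j p * V j q))"
    using svd i by (simp add: is_svd_expansion sum_distrib_right mult.assoc)
  also have "\<dots> = (\<Sum>p<min a b. U i p * S p p * (\<Sum>j<b. V j p * V j q))"
    by (subst sum.swap) (simp add: sum_distrib_left)
  also have "\<dots> = (\<Sum>p<min a b. if p = q then U i p * S p p else 0)"
    by (intro sum.cong refl) (simp add: orthV)
  also have "\<dots> = S q q * U i q"
    using q by simp
  finally show ?thesis .
qed

lemma is_svd_fro_sq:
  assumes svd: "is_svd a b G U S V"
  shows "fro_sq a b G = (\<Sum>q<min a b. (S q q)\<^sup>2)"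
proof -
  have orthU: "(\<Sum>i<a. U i q * U i q) = 1" if "q < min a b" for q
    using svd that by (simp add: is_svd_def orth_def)
  have square: "(G i j)\<^sup>2 = (\<Sum>q<min a b. U i q * S q q * (G i j * V j q))"
    if "i < a" "j < b" for i j
  proof -
    have "(G i j)\<^sup>2 = G i j * (\<Sum>q<min a b. U i q * S q q * V j q)"
      using is_svd_expansion[OF svd that] by (simp add: power2_eq_square)
    then show ?thesis
      by (simp add: sum_distrib_left mult_ac)
  qed
  have "fro_sq a b G = (\<Sum>i<a. \<Sum>j<b. \<Sum>q<min a b. U i q * S q q * (G i j * V j q))"
    unfolding fro_sq_def by (intro sum.cong refl) (simp add: square)
  also have "\<dots> = (\<Sum>i<a. \<Sum>q<min a b. U i q * S q q * (\<Sum>j<b. G i j * V j q))"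
    by (simp add: sum.swap[where A = "{..<b}"] sum_distrib_left)
  also have "\<dots> = (\<Sum>q<min a b. (S q q)\<^sup>2 * (\<Sum>i<a. U i q * U i q))"
    using svd
    by (simp add: is_svd_right_singular power2_eq_square sum_distrib_left mult_ac sum.swap[where A = "{..<a}"])
  also have "\<dots> = (\<Sum>q<min a b. (S q q)\<^sup>2)"
    by (simp add: orthU)
  finally show ?thesis .
qed

lemma fro_sq_diag:
  assumes "\<And>i j. i < a \<Longrightarrow> j < b \<Longrightarrow> G i j = (if i = j then d i else 0)"
  shows "fro_sq a b G = (\<Sum>i<min a b. (d i)\<^sup>2)"
proof -
  have "(\<Sum>j<b. (G i j)\<^sup>2) = (\<Sum>j<b. if j = i then (d i)\<^sup>2 else 0)" if "i < a" for i
    using assms that by (intro sum.cong refl) auto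
  then have "fro_sq a b G = (\<Sum>i<a. if i < b then (d i)\<^sup>2 else 0)"
    unfolding fro_sq_def by (intro sum.cong refl) simp
  also have "\<dots> = (\<Sum>i\<in>{i\<in>{..<a}. i < b}. (d i)\<^sup>2)"
    by (rule sum.inter_filter[symmetric]) simp
  also have "{i\<in>{..<a}. i < b} = {..<min a b}"
    by auto
  finally show ?thesis .
qed

lemma is_svd_diag_right:
  assumes svd: "is_svd a b G U S V"
    and diag: "\<And>i j. i < a \<Longrightarrow> j < b \<Longrightarrow> G i j = (if i = j then d i else 0)"
    and "i < a" "q < min a b"
  shows "S q q * U i q = (if i < b then d i * V i q else 0)"
proof -
  have "(\<Sum>j<b. G i j * V j q) = (\<Sum>j<b. if j = i then d i * V i q else 0)"
    using diag \<open>i < a\<close> by (intro sum.cong refl) auto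
  then show ?thesis
    using is_svd_right_singular[OF svd assms(3,4)] by simp
qed

lemma is_svd_diag_left:
  assumes svd: "is_svd a b G U S V"
    and diag: "\<And>i j. i < a \<Longrightarrow> j < b \<Longrightarrow> G i j = (if i = j then d i else 0)"
    and "j < b" "q < min a b"
  shows "S q q * V j q = (if j < a then d j * U j q else 0)"
  using is_svd_diag_right[OF is_svd_transpose[OF svd], of d] diag assms(3,4)
  by (simp add: min.commute)

lemma is_svd_diag_singular_value:
  assumes svd: "is_svd a b G U S V"
    and diag: "\<And>i j. i < a \<Longrightarrow> j < b \<Longrightarrow> G i j = (if i = j then d i else 0)"
    and q: "q < min a b"
  shows "S q q = 0 \<or> (\<exists>i<min a b. S q q = \<bar>d i\<bar>)"
proof -
  have "(\<Sum>i<a. U i q * U i q) \<noteq> 0"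
    using svd q by (simp add: is_svd_def orth_def)
  then obtain i where i: "i < a" and Ui: "U i q \<noteq> 0"
    by (rule sum.not_neutral_contains_not_neutral) simp
  show ?thesis
  proof (cases "i < b")
    case True
    have U: "S q q * U i q = d i * V i q"
      using is_svd_diag_right[OF svd diag i q] True by simp
    have V: "S q q * V i q = d i * U i q"
      using is_svd_diag_left[OF svd diag True q] i by simp
    have "(S q q)\<^sup>2 * U i q = S q q * (d i * V i q)"
      by (simp add: power2_eq_square U[symmetric] mult.assoc)
    also have "\<dots> = (d i)\<^sup>2 * U i q"
      by (simp add: power2_eq_square flip: V)
    finally have "(S q q)\<^sup>2 * U i q = (d i)\<^sup>2 * U i q" .
    then have "(S q q)\<^sup>2 = \<bar>d i\<bar>\<^sup>2"
      using Ui by simp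
    moreover have "0 \<le> S q q"
      using svd q by (simp add: is_svd_def)
    ultimately have "S q q = \<bar>d i\<bar>"
      using power2_eq_iff_nonneg[of "S q q" "\<bar>d i\<bar>"] by simp
    then show ?thesis
      using i True by auto
  next
    case False
    then show ?thesis
      using is_svd_diag_right[OF svd diag i q] Ui by simp
  qed
qed

lemma sum_lessThan_if_less:
  assumes "p \<le> k"
  shows "(\<Sum>q<k. if q < p then A else B) = of_nat p * A + of_nat (k - p) * (B :: 'a :: semiring_1)"
proof -
  have "{..<k} \<inter> {q. q < p} = {..<p}" and "{..<k} \<inter> - {q. q < p} = {p..<k}"
    using assms by auto
  then show ?thesis
    by (simp add: sum.If_cases)
qed

text \<open>Counting squared singular values: every singular value is \<open>0\<close>, \<open>\<bar>d 0\<bar>\<close> or \<open>\<beta>\<close>,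
  and if the \<open>p\<close>-th were not \<open>\<beta>\<close>, the ones from \<open>p\<close> on would all be at most \<open>\<bar>d 0\<bar>\<close>,
  leaving the Frobenius norm short of \<open>(d 0)\<^sup>2 + (k - 1) \<beta>\<^sup>2\<close>.\<close>

lemma is_svd_diag_top_singular_value:
  assumes svd: "is_svd a b G U S V"
    and diag: "\<And>i j. i < a \<Longrightarrow> j < b \<Longrightarrow> G i j = (if i = j then d i else 0)"
    and small: "\<bar>d 0\<bar> < \<beta>" and large: "\<And>i. 0 < i \<Longrightarrow> i < min a b \<Longrightarrow> \<bar>d i\<bar> = \<beta>"
    and p: "Suc p < min a b"
  shows "S p p = \<beta>"
proof (rule ccontr)
  assume S_pp: "S p p \<noteq> \<beta>"
  define k where "k = min a b"
  have p_k: "p < k"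
    using p by (simp add: k_def)
  have S_nonneg: "0 \<le> S q q" if "q < k" for q
    using svd that by (simp add: is_svd_def k_def)
  have S_values: "S q q = 0 \<or> S q q = \<bar>d 0\<bar> \<or> S q q = \<beta>" if "q < k" for q
  proof -
    have "S q q = 0 \<or> (\<exists>i<k. S q q = \<bar>d i\<bar>)"
      using is_svd_diag_singular_value[OF svd diag, of q] that by (simp add: k_def)
    then show ?thesis
      using large by (auto simp: k_def) (metis neq0_conv)
  qed
  have tail: "S q q \<le> \<bar>d 0\<bar>" if "p \<le> q" "q < k" for q
  proof -
    have "S q q \<le> S p p"
      using svd that by (simp add: is_svd_def k_def)
    also have "S p p \<le> \<bar>d 0\<bar>"
      using S_values[OF p_k] S_pp by auto
    finally show ?thesis .
  qed
  have "(\<Sum>i<k. (d i)\<^sup>2) = (\<Sum>q<k. (S q q)\<^sup>2)"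
    using fro_sq_diag[OF diag] is_svd_fro_sq[OF svd] by (simp add: k_def)
  also have "\<dots> \<le> (\<Sum>q<k. if q < p then \<beta>\<^sup>2 else (d 0)\<^sup>2)"
  proof (rule sum_mono)
    fix q assume "q \<in> {..<k}"
    then have "S q q \<le> (if q < p then \<beta> else \<bar>d 0\<bar>)" and "0 \<le> S q q"
      using S_values[of q] small tail[of q] S_nonneg[of q] by auto
    then show "(S q q)\<^sup>2 \<le> (if q < p then \<beta>\<^sup>2 else (d 0)\<^sup>2)"
      using power_mono[of "S q q" \<beta> 2] power_mono[of "S q q" "\<bar>d 0\<bar>" 2] by (cases "q < p") auto
  qed
  also have "\<dots> = real p * \<beta>\<^sup>2 + real (k - p) * (d 0)\<^sup>2"
    using p_k by (simp add: sum_lessThan_if_less)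
  finally have upper: "(\<Sum>i<k. (d i)\<^sup>2) \<le> real p * \<beta>\<^sup>2 + real (k - p) * (d 0)\<^sup>2" .
  obtain k' where k': "k = Suc k'"
    using p_k by (metis lessE)
  have "(\<Sum>i<k'. (d (Suc i))\<^sup>2) = (\<Sum>i<k'. \<beta>\<^sup>2)"
    using large k' by (intro sum.cong refl) (metis k_def lessThan_iff not_less_eq power2_abs zero_less_Suc)
  then have total: "(\<Sum>i<k. (d i)\<^sup>2) = (d 0)\<^sup>2 + real (k - 1) * \<beta>\<^sup>2"
    unfolding k' sum.lessThan_Suc_shift by simp
  define c where "c = real (k - 1 - p)"
  have "0 < k - 1 - p"
    using p by (simp add: k_def)
  then have gap: "c * (d 0)\<^sup>2 < c * \<beta>\<^sup>2"
    using power_strict_mono[OF small abs_ge_zero, of 2] by (simp add: c_def)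
  have "real (k - p) = c + 1" and "real (k - 1) = real p + c"
    using p by (simp_all add: c_def k_def of_nat_diff)
  then show False
    using upper total gap by (simp add: distrib_right)
qed

lemma is_svd_diag_top_vectors_vanish_first:
  assumes svd: "is_svd a b G U S V"
    and diag: "\<And>i j. i < a \<Longrightarrow> j < b \<Longrightarrow> G i j = (if i = j then d i else 0)"
    and small: "\<bar>d 0\<bar> < \<beta>" and large: "\<And>i. 0 < i \<Longrightarrow> i < min a b \<Longrightarrow> \<bar>d i\<bar> = \<beta>"
    and p: "Suc p < min a b"
  shows "U 0 p = 0 \<and> V 0 p = 0"
proof -
  have S_pp: "S p p = \<beta>"
    using is_svd_diag_top_singular_value[OF svd diag small large p] .
  have U: "\<beta> * U 0 p = d 0 * V 0 p"
    using is_svd_diag_right[OF svd diag, of 0 p] S_pp p by simp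
  have V: "\<beta> * V 0 p = d 0 * U 0 p"
    using is_svd_diag_left[OF svd diag, of 0 p] S_pp p by simp
  have "\<beta>\<^sup>2 * U 0 p = (d 0)\<^sup>2 * U 0 p"
    using U by (simp add: power2_eq_square mult.assoc flip: V)
  moreover have "(d 0)\<^sup>2 < \<beta>\<^sup>2"
    using power_strict_mono[OF small abs_ge_zero, of 2] by simp
  ultimately have "U 0 p = 0"
    by auto
  moreover have "0 < \<beta>"
    using small by linarith
  ultimately show ?thesis
    using V by simp
qed

lemma galore_run_projector_update:
  assumes "galore_run NL m n GF r \<tau> rho \<xi> x P Q" and "l < NL"
  shows "if t mod \<tau> = 0 then
           \<exists>U S V. is_svd (m l) (n l) (GF (x t) (\<xi> t) l) U S V \<and>
             (\<forall>i<m l. \<forall>a<r l. P t l i a = U i a) \<and> (\<forall>j<n l. \<forall>a<r l. Q t l j a = V j a)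
         else
           (\<forall>i<m l. \<forall>a<r l. P t l i a = P (t - 1) l i a) \<and>
           (\<forall>j<n l. \<forall>a<r l. Q t l j a = Q (t - 1) l j a)"
  using assms unfolding galore_run_def by blast

text \<open>\<open>t - t mod \<tau>\<close> is the most recent refresh step; for \<open>\<tau> = 0\<close> only step \<open>0\<close> refreshes.\<close>

lemma galore_run_projector_svd:
  assumes run: "galore_run NL m n GF r \<tau> rho \<xi> x P Q" and l: "l < NL"
  obtains U S V where "is_svd (m l) (n l) (GF (x (t - t mod \<tau>)) (\<xi> (t - t mod \<tau>)) l) U S V"
    and "\<forall>i<m l. \<forall>a<r l. P t l i a = U i a" and "\<forall>j<n l. \<forall>a<r l. Q t l j a = V j a"
proof -
  have held: "(\<forall>i<m l. \<forall>a<r l. P t l i a = P (t - t mod \<tau>) l i a) \<and>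
              (\<forall>j<n l. \<forall>a<r l. Q t l j a = Q (t - t mod \<tau>) l j a)"
  proof (induction t)
    case 0
    then show ?case by simp
  next
    case (Suc t)
    show ?case
    proof (cases "Suc t mod \<tau> = 0")
      case True
      then show ?thesis by simp
    next
      case False
      then have "Suc t mod \<tau> = Suc (t mod \<tau>)"
        by (metis mod_Suc)
      then have "Suc t - Suc t mod \<tau> = t - t mod \<tau>"
        by simp
      then show ?thesis
        using galore_run_projector_update[OF run l, of "Suc t"] False Suc.IH by simp
    qed
  qed
  have "(t - t mod \<tau>) mod \<tau> = 0"
    by (simp add: minus_mod_eq_mult_div)
  then obtain U S V where "is_svd (m l) (n l) (GF (x (t - t mod \<tau>)) (\<xi> (t - t mod \<tau>)) l) U S V"
    and "\<forall>i<m l. \<forall>a<r l. P (t - t mod \<tau>) l i a = U i a"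
    and "\<forall>j<n l. \<forall>a<r l. Q (t - t mod \<tau>) l j a = V j a"
    using galore_run_projector_update[OF run l, of "t - t mod \<tau>"] by auto
  with held that show ?thesis
    by simp
qed

lemma galore_run_entry_fixed:
  assumes run: "galore_run NL m n GF r \<tau> rho \<xi> x P Q"
    and "l < NL" "i < m l" "j < n l"
    and "\<forall>a<r l. P t l i a = 0" and "\<forall>a<r l. Q t l j a = 0"
  shows "x (Suc t) l i j = x t l i j"
proof -
  have "x (Suc t) l i j = (let hist = (\<lambda>s. if s \<le> t then proj_grad m n GF P Q \<xi> x s l else (\<lambda>_ _. 0));
               D = rho l t hist in
           if m l \<le> n l then x t l i j + (\<Sum>a<r l. P t l i a * D a j)
           else x t l i j + (\<Sum>a<r l. D i a * Q t l j a))"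
    using run assms(2-4) unfolding galore_run_def by simp
  with assms(5,6) show ?thesis
    by (simp add: Let_def)
qed

lemma pinner_commute: "pinner NL m n x y = pinner NL m n y x"
  unfolding pinner_def by (simp add: mult.commute)

lemma pinner_padd_right: "pinner NL m n c (padd x h) = pinner NL m n c x + pinner NL m n c h"
  unfolding pinner_def padd_def by (simp add: sum.distrib distrib_left)

lemma pinner_add_scaled_left:
  "pinner NL m n (\<lambda>l i j. a l i j + t * b l i j) h = pinner NL m n a h + t * pinner NL m n b h"
  unfolding pinner_def by (simp add: sum.distrib distrib_right sum_distrib_left mult.assoc)

lemma has_grad_add_linear:
  assumes grad: "has_grad NL m n f g" and N: "valid_param NL m n N"
  shows "has_grad NL m n (\<lambda>x. f x + t * pinner NL m n N x) (\<lambda>x l i j. g x l i j + t * N l i j)"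
  unfolding has_grad_def
proof (intro allI impI)
  fix x assume x: "valid_param NL m n x"
  have "valid_param NL m n (\<lambda>l i j. g x l i j + t * N l i j)"
    using grad N x by (auto simp: has_grad_def valid_param_def)
  moreover have remainder: "f (padd x h) + t * pinner NL m n N (padd x h) - (f x + t * pinner NL m n N x)
      - pinner NL m n (\<lambda>l i j. g x l i j + t * N l i j) h = f (padd x h) - f x - pinner NL m n (g x) h" for h
    by (simp add: pinner_padd_right pinner_add_scaled_left pinner_commute[of NL m n N] algebra_simps)
  ultimately show "valid_param NL m n (\<lambda>l i j. g x l i j + t * N l i j) \<and>
       (\<forall>e>0. \<exists>\<delta>>0. \<forall>h. valid_param NL m n h \<and> 0 < pnorm NL m n h \<and> pnorm NL m n h < \<delta> \<longrightarrow>
       \<bar>f (padd x h) + t * pinner NL m n N (padd x h) - (f x + t * pinner NL m n N x) -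
        pinner NL m n (\<lambda>l i j. g x l i j + t * N l i j) h\<bar> \<le> e * pnorm NL m n h)"
    using grad x unfolding has_grad_def remainder by blast
qed

definition corner :: "real \<Rightarrow> param" where
  "corner z = (\<lambda>l i j. if l = 0 \<and> i = 0 \<and> j = 0 then z else 0)"

definition noise_dir :: "(nat \<Rightarrow> nat) \<Rightarrow> (nat \<Rightarrow> nat) \<Rightarrow> param" where
  "noise_dir m n = (\<lambda>l i j. if l = 0 \<and> 0 < i \<and> i = j \<and> i < min (m 0) (n 0) then 2 else 0)"

definition corner_loss :: "param \<Rightarrow> real" where
  "corner_loss x = (x 0 0 0)\<^sup>2 / 2"

definition corner_loss_grad :: "param \<Rightarrow> param" where
  "corner_loss_grad x = corner (x 0 0 0)"

definition noisy_loss :: "nat \<Rightarrow> (nat \<Rightarrow> nat) \<Rightarrow> (nat \<Rightarrow> nat) \<Rightarrow> param \<Rightarrow> real \<Rightarrow> real" where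
  "noisy_loss NL m n x \<xi> = corner_loss x + \<xi> * pinner NL m n (noise_dir m n) x"

definition noisy_grad :: "(nat \<Rightarrow> nat) \<Rightarrow> (nat \<Rightarrow> nat) \<Rightarrow> param \<Rightarrow> real \<Rightarrow> param" where
  "noisy_grad m n x \<xi> = (\<lambda>l i j. corner_loss_grad x l i j + \<xi> * noise_dir m n l i j)"

lemma noisy_grad_first_layer:
  assumes "x 0 0 0 = 1" "i < m 0" "j < n 0"
  shows "noisy_grad m n x \<xi> 0 i j = (if i = j then (if i = 0 then 1 else 2 * \<xi>) else 0)"
  using assms by (auto simp: noisy_grad_def corner_loss_grad_def corner_def noise_dir_def)

locale first_layer =
  fixes NL :: nat and m n :: "nat \<Rightarrow> nat"
  assumes layers: "0 < NL" and rows: "0 < m 0" and cols: "0 < n 0"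
begin

lemma pinner_corner: "pinner NL m n (corner z) y = z * y 0 0 0"
proof -
  have row: "(\<Sum>j<n l. corner z l i j * y l i j) = (if l = 0 \<and> i = 0 then z * y 0 0 0 else 0)" for l i
  proof -
    have "(\<Sum>j<n l. corner z l i j * y l i j)
        = (\<Sum>j<n l. if j = 0 then (if l = 0 \<and> i = 0 then z * y 0 0 0 else 0) else 0)"
      by (intro sum.cong refl) (auto simp: corner_def)
    then show ?thesis
      using cols by auto
  qed
  have layer: "(\<Sum>i<m l. \<Sum>j<n l. corner z l i j * y l i j) = (if l = 0 then z * y 0 0 0 else 0)" for l
  proof -
    have "(\<Sum>i<m l. \<Sum>j<n l. corner z l i j * y l i j)
        = (\<Sum>i<m l. if i = 0 then (if l = 0 then z * y 0 0 0 else 0) else 0)"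
      by (intro sum.cong refl) (simp add: row)
    then show ?thesis
      using rows by auto
  qed
  show ?thesis
    using layers by (simp add: pinner_def layer)
qed

lemma abs_corner_entry_le_pnorm: "\<bar>y 0 0 0\<bar> \<le> pnorm NL m n y"
proof -
  have "(y 0 0 0)\<^sup>2 \<le> (\<Sum>j<n 0. y 0 0 j * y 0 0 j)"
    using member_le_sum[of 0 "{..<n 0}" "\<lambda>j. y 0 0 j * y 0 0 j"] cols by (simp add: power2_eq_square)
  also have "\<dots> \<le> (\<Sum>i<m 0. \<Sum>j<n 0. y 0 i j * y 0 i j)"
    using member_le_sum[of 0 "{..<m 0}" "\<lambda>i. \<Sum>j<n 0. y 0 i j * y 0 i j"] rows by (simp add: sum_nonneg)
  also have "\<dots> \<le> pinner NL m n y y"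
    using member_le_sum[of 0 "{..<NL}" "\<lambda>l. \<Sum>i<m l. \<Sum>j<n l. y l i j * y l i j"] layers
    by (simp add: pinner_def sum_nonneg)
  finally show ?thesis
    unfolding pnorm_def using real_sqrt_le_mono real_sqrt_abs by metis
qed

lemma pnorm_corner: "pnorm NL m n (corner z) = \<bar>z\<bar>"
  unfolding pnorm_def pinner_corner by (simp add: corner_def)

lemma valid_param_corner: "valid_param NL m n (corner z)"
  using layers rows cols unfolding valid_param_def corner_def by auto

lemma has_grad_corner_loss: "has_grad NL m n corner_loss corner_loss_grad"
  unfolding has_grad_def
proof (intro allI impI conjI)
  fix x
  show "valid_param NL m n (corner_loss_grad x)"
    by (simp add: corner_loss_grad_def valid_param_corner)
  fix e :: real assume e: "0 < e"
  show "\<exists>\<delta>>0. \<forall>h. valid_param NL m n h \<and> 0 < pnorm NL m n h \<and> pnorm NL m n h < \<delta> \<longrightarrow>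
          \<bar>corner_loss (padd x h) - corner_loss x - pinner NL m n (corner_loss_grad x) h\<bar> \<le> e * pnorm NL m n h"
  proof (intro exI[of _ "2 * e"] conjI allI impI)
    show "0 < 2 * e"
      using e by simp
    fix h assume h: "valid_param NL m n h \<and> 0 < pnorm NL m n h \<and> pnorm NL m n h < 2 * e"
    have remainder: "corner_loss (padd x h) - corner_loss x - pinner NL m n (corner_loss_grad x) h = (h 0 0 0)\<^sup>2 / 2"
      by (simp add: corner_loss_def corner_loss_grad_def pinner_corner padd_def power2_eq_square algebra_simps)
    have "(h 0 0 0)\<^sup>2 \<le> pnorm NL m n h * pnorm NL m n h"
      using power_mono[OF abs_corner_entry_le_pnorm abs_ge_zero, of h 2] by (simp add: power2_eq_square)
    moreover have "pnorm NL m n h * pnorm NL m n h \<le> 2 * e * pnorm NL m n h"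
      using h by (intro mult_right_mono) auto
    ultimately show "\<bar>corner_loss (padd x h) - corner_loss x - pinner NL m n (corner_loss_grad x) h\<bar>
        \<le> e * pnorm NL m n h"
      unfolding remainder by simp
  qed
qed

lemma corner_loss_grad_lipschitz:
  "pnorm NL m n (pdiff (corner_loss_grad x) (corner_loss_grad y)) \<le> pnorm NL m n (pdiff x y)"
proof -
  have "pdiff (corner_loss_grad x) (corner_loss_grad y) = corner (pdiff x y 0 0 0)"
    by (intro ext) (simp add: pdiff_def corner_loss_grad_def corner_def)
  then show ?thesis
    using abs_corner_entry_le_pnorm[of "pdiff x y"] by (simp add: pnorm_corner)
qed

lemma stoch_oracle_noisy:
  "stoch_oracle NL m n corner_loss corner_loss_grad (noisy_loss NL m n) (noisy_grad m n)
     (pmf_of_set {-1, 1}) (\<lambda>l. sqrt (fro_sq (m l) (n l) (noise_dir m n l)))"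
proof -
  have "valid_param NL m n (noise_dir m n)"
    using layers unfolding valid_param_def noise_dir_def by auto
  then have "\<forall>\<xi>. has_grad NL m n (\<lambda>x. noisy_loss NL m n x \<xi>) (\<lambda>x. noisy_grad m n x \<xi>)"
    using has_grad_add_linear[OF has_grad_corner_loss] by (simp add: noisy_loss_def noisy_grad_def)
  moreover have "integrable (measure_pmf (pmf_of_set {-1, 1::real})) h" for h :: "real \<Rightarrow> real"
    by (simp add: integrable_measure_pmf_finite)
  moreover have "fro_sq (m l) (n l) (\<lambda>i j. noisy_grad m n x \<xi> l i j - corner_loss_grad x l i j)
      = \<xi>\<^sup>2 * fro_sq (m l) (n l) (noise_dir m n l)" for x \<xi> l
    by (simp add: fro_sq_def noisy_grad_def power_mult_distrib sum_distrib_left)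
  moreover have "0 \<le> fro_sq a b M" for a b M
    unfolding fro_sq_def by (simp add: sum_nonneg)
  ultimately show ?thesis
    unfolding stoch_oracle_def noisy_loss_def[abs_def] noisy_grad_def[abs_def]
    by (simp add: integral_pmf_of_set)
qed

lemma galore_keeps_corner:
  assumes run: "galore_run NL m n (noisy_grad m n) r \<tau> rho \<xi> x P Q"
    and rank: "r 0 < min (m 0) (n 0)" and signs: "\<forall>t. \<xi> t \<in> {-1, 1}" and start: "x 0 = corner 1"
  shows "x t 0 0 0 = 1"
proof (induction t rule: less_induct)
  case (less t)
  show ?case
  proof (cases t)
    case 0
    then show ?thesis
      using start by (simp add: corner_def)
  next
    case (Suc s)
    define t' where "t' = s - s mod \<tau>"
    have corner_t': "x t' 0 0 0 = 1"
      using less Suc by (simp add: t'_def)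
    obtain U S V where svd: "is_svd (m 0) (n 0) (noisy_grad m n (x t') (\<xi> t') 0) U S V"
      and P: "\<forall>i<m 0. \<forall>a<r 0. P s 0 i a = U i a" and Q: "\<forall>j<n 0. \<forall>a<r 0. Q s 0 j a = V j a"
      using galore_run_projector_svd[OF run layers, of s] unfolding t'_def by blast
    have "U 0 a = 0 \<and> V 0 a = 0" if "a < r 0" for a
    proof (rule is_svd_diag_top_vectors_vanish_first[OF svd])
      show "noisy_grad m n (x t') (\<xi> t') 0 i j = (if i = j then if i = 0 then 1 else 2 * \<xi> t' else 0)"
        if "i < m 0" "j < n 0" for i j
        using noisy_grad_first_layer[of "x t'" i m j n] corner_t' that by simp
      show "\<bar>if (0::nat) = 0 then 1 else 2 * \<xi> t'\<bar> < 2"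
        by simp
      have "\<xi> t' = -1 \<or> \<xi> t' = 1"
        using signs by simp
      then show "\<bar>if i = 0 then 1 else 2 * \<xi> t'\<bar> = 2" if "0 < i" for i :: nat
        using that by auto
      show "Suc a < min (m 0) (n 0)"
        using rank \<open>a < r 0\<close> by linarith
    qed
    then have "x (Suc s) 0 0 0 = x s 0 0 0"
      using galore_run_entry_fixed[OF run layers rows cols] P Q rows cols by simp
    then show ?thesis
      using less Suc by simp
  qed
qed

end

theorem theorem1:
  fixes NL :: nat and m n :: "nat \<Rightarrow> nat"
  assumes "NL \<ge> 1" and "\<forall>l<NL. 0 < m l \<and> 0 < n l"
  shows "\<exists>(f :: param \<Rightarrow> real) (g :: param \<Rightarrow> param) (L :: real)
            (F :: param \<Rightarrow> real \<Rightarrow> real) (GF :: param \<Rightarrow> real \<Rightarrow> param) (D :: real pmf)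
            (sig :: nat \<Rightarrow> real) (x0 :: param) (eps0 :: real).
     has_grad NL m n f g \<and>
     bdd_below (f ` {x. valid_param NL m n x}) \<and>
     (\<forall>x y. valid_param NL m n x \<longrightarrow> valid_param NL m n y \<longrightarrow>
        pnorm NL m n (pdiff (g x) (g y)) \<le> L * pnorm NL m n (pdiff x y)) \<and>
     stoch_oracle NL m n f g F GF D sig \<and>
     valid_param NL m n x0 \<and> 0 < eps0 \<and>
     (\<forall>(r :: nat \<Rightarrow> nat) (\<tau> :: nat) rho (\<xi> :: nat \<Rightarrow> real) x P Q.
        (\<forall>l<NL. r l < min (m l) (n l)) \<and> 1 \<le> \<tau> \<and>
        (\<forall>t. \<xi> t \<in> set_pmf D) \<and> x 0 = x0 \<and>
        galore_run NL m n GF r \<tau> rho \<xi> x P Q \<longrightarrow>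
        (\<forall>t. eps0 \<le> (pnorm NL m n (g (x t)))\<^sup>2))"
proof -
  interpret first_layer NL m n
    using assms by unfold_locales auto
  have "bdd_below (corner_loss ` {x. valid_param NL m n x})"
    by (rule bdd_belowI[of _ 0]) (auto simp: corner_loss_def)
  moreover have "1 \<le> (pnorm NL m n (corner_loss_grad (x t)))\<^sup>2"
    if "\<forall>l<NL. r l < min (m l) (n l)" "\<forall>t. \<xi> t \<in> set_pmf (pmf_of_set {-1, 1})" "x 0 = corner 1"
      "galore_run NL m n (noisy_grad m n) r \<tau> rho \<xi> x P Q"
    for r \<tau> rho \<xi> x P Q t
    using galore_keeps_corner[of r \<tau> rho \<xi> x P Q t] that layers
    by (simp add: corner_loss_grad_def pnorm_corner)
  ultimately show ?thesis
    using has_grad_corner_loss corner_loss_grad_lipschitz stoch_oracle_noisy valid_param_corner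
    by (intro exI[of _ corner_loss] exI[of _ corner_loss_grad] exI[of _ "1::real"]
        exI[of _ "noisy_loss NL m n"] exI[of _ "noisy_grad m n"] exI[of _ "pmf_of_set {-1, 1}"]
        exI[of _ "\<lambda>l. sqrt (fro_sq (m l) (n l) (noise_dir m n l))"] exI[of _ "corner 1"]) auto
qed

end
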